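(* Under the setting and assumptions of the following model: $n\ge p\ge1$, $m\ge1$, a fixed feature map $\bm f:\mathbb{R}^d\to\mathbb{R}^p$; training data $\{(\bm x_i,y_i)\}_{i=1}^n$ and testing data $\{(\bm u_i,v_i)\}_{i=1}^m$ drawn as two independent samples of i.i.d. rows from a common distribution with, conditionally on predictors, independent responses $y\mid\bm x\sim\mathcal N(\bm f(\bm x)'\bm\beta,\sigma^2)$; $\bm F_x$ ($n\times p$, rows $\bm f(\bm x_i)'$) of rank $p$, $\bm F_u$ ($m\times p$, rows $\bm f(\bm u_i)'$); $\hat{\bm\beta}=(\bm F_x'\bm F_x)^{-1}\bm F_x'\bm y$ and $\widehat{\mathcal E}=\frac1m\sum_{i=1}^m\{v_i-\bm f(\bm u_i)'\hat{\bm\beta}\}^2$. If in addition the "matched split" condition $$\frac1n\bm F_x'\bm F_x=\frac1m\bm F_u'\bm F_u$$ holds almost surely, then $$E\{\widehat{\mathcal E}^2\}=\sigma^4\Big\{\Big(1+\frac pn\Big)^2+\frac2m+\frac{4p}{mn}+\frac{2p}{n^2}\Big\}.$$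
   Context: The expectation $E\{\cdot\}$ is over all randomness, including predictors and responses of both training and testing sets. *)

theory Defs
  imports "HOL-Probability.Probability"
begin

definition design :: "('d \<Rightarrow> real^'p) \<Rightarrow> ('k \<Rightarrow> 'd) \<Rightarrow> real^'p^'k::finite" where
  "design f xs = (\<chi> i. f (xs i))"

definition ols :: "real^'p^'n \<Rightarrow> real^'n \<Rightarrow> real^'p" where
  "ols F y = (matrix_inv (transpose F ** F) ** transpose F) *v y"

definition test_error :: "('d \<Rightarrow> real^'p) \<Rightarrow> ('m::finite \<Rightarrow> 'd) \<Rightarrow> ('m \<Rightarrow> real) \<Rightarrow> real^'p \<Rightarrow> real" where
  "test_error f us vs b = (1 / real CARD('m)) * (\<Sum>j\<in>UNIV. (vs j - f (us j) \<bullet> b)\<^sup>2)"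

text \<open>Common row distribution: x ~ Px, y = f(x)'beta + e with e ~ N(0, sigma^2) independent of x,
  i.e. y | x ~ N(f(x)'beta, sigma^2).\<close>
definition row_distr :: "'d::euclidean_space measure \<Rightarrow> ('d \<Rightarrow> real^'p) \<Rightarrow> real^'p \<Rightarrow> real \<Rightarrow> ('d \<times> real) measure" where
  "row_distr Px f \<beta> \<sigma> =
     distr (Px \<Otimes>\<^sub>M density lborel (normal_density 0 \<sigma>)) (borel \<Otimes>\<^sub>M borel)
       (\<lambda>(x, e). (x, f x \<bullet> \<beta> + e))"

end

theory Submission
  imports Defs
begin

text \<open>Given the predictors, the test error is a quadratic form in the Gaussian noise: with
  \<open>H = F\<^sub>u (F\<^sub>x' F\<^sub>x)\<^sup>-\<^sup>1 F\<^sub>x'\<close> it equals \<open>|\<epsilon>\<^sub>u - H \<epsilon>\<^sub>x|\<^sup>2 / m = |C z|\<^sup>2 / m\<close>, where \<open>z\<close> is the vector of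
  all \<open>n + m\<close> i.i.d. \<open>N(0, \<sigma>\<^sup>2)\<close> errors and \<open>C = [-H | I]\<close>. Isserlis' theorem gives
  \<open>E (z' Q z)\<^sup>2 = \<sigma>\<^sup>4 ((tr Q)\<^sup>2 + 2 tr Q\<^sup>2)\<close> for symmetric \<open>Q\<close>; for \<open>Q = C' C\<close> the traces are
  \<open>m + tr K\<close> and \<open>m + 2 tr K + tr K\<^sup>2\<close> with \<open>K = H H'\<close>. The matched split makes \<open>K\<^sup>2 = (m/n) K\<close>
  and \<open>tr K = (m/n) p\<close>, so the conditional second moment is the same constant for almost every
  design, and integrating over the predictors, which are independent of the errors, gives the
  theorem.\<close>

lemma prod_power_of_bool_eq:
  "(\<Prod>k\<in>UNIV. z k ^ of_bool (a = k)) = z a"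
  for z :: "'k::finite \<Rightarrow> 'b::comm_monoid_mult"
proof -
  have "(\<Prod>k\<in>UNIV. z k ^ of_bool (a = k)) = (\<Prod>k\<in>UNIV. if a = k then z k else 1)"
    by (intro prod.cong) auto
  then show ?thesis
    by (simp add: prod.delta)
qed

lemma sum_pairings_quadratic:
  fixes Q :: "'k::finite \<Rightarrow> 'k \<Rightarrow> real"
  assumes symmetric: "\<And>a b. Q a b = Q b a"
  shows "(\<Sum>a\<in>UNIV. \<Sum>b\<in>UNIV. \<Sum>c\<in>UNIV. \<Sum>d\<in>UNIV. Q a b * Q c d *
            (of_bool (a = b \<and> c = d) + of_bool (a = c \<and> b = d) + of_bool (a = d \<and> b = c)))
       = (\<Sum>a\<in>UNIV. Q a a)\<^sup>2 + 2 * (\<Sum>a\<in>UNIV. \<Sum>b\<in>UNIV. (Q a b)\<^sup>2)"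
proof -
  have if_zero: "\<And>P h A. (\<Sum>x\<in>A. if P then h x else (0::real)) = (if P then sum h A else 0)"
    by auto
  have "(\<Sum>a\<in>UNIV. \<Sum>b\<in>UNIV. \<Sum>c\<in>UNIV. \<Sum>d\<in>UNIV. Q a b * Q c d * of_bool (a = b \<and> c = d))
      = (\<Sum>a\<in>UNIV. \<Sum>b\<in>UNIV. \<Sum>c\<in>UNIV. \<Sum>d\<in>UNIV. if a = b then (if c = d then Q a b * Q c d else 0) else 0)"
    by (intro sum.cong refl) auto
  also have "\<dots> = (\<Sum>a\<in>UNIV. \<Sum>c\<in>UNIV. Q a a * Q c c)"
    by (simp only: if_zero sum.delta' finite UNIV_I if_True)
  finally have trace_term: "(\<Sum>a\<in>UNIV. \<Sum>b\<in>UNIV. \<Sum>c\<in>UNIV. \<Sum>d\<in>UNIV. Q a b * Q c d * of_bool (a = b \<and> c = d))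
      = (\<Sum>a\<in>UNIV. Q a a)\<^sup>2"
    by (simp add: power2_eq_square sum_product)
  have "(\<Sum>a\<in>UNIV. \<Sum>b\<in>UNIV. \<Sum>c\<in>UNIV. \<Sum>d\<in>UNIV. Q a b * Q c d * of_bool (a = c \<and> b = d))
      = (\<Sum>a\<in>UNIV. \<Sum>b\<in>UNIV. \<Sum>c\<in>UNIV. if a = c then (\<Sum>d\<in>UNIV. if b = d then Q a b * Q c d else 0) else 0)"
    by (intro sum.cong refl) auto
  then have square_term: "(\<Sum>a\<in>UNIV. \<Sum>b\<in>UNIV. \<Sum>c\<in>UNIV. \<Sum>d\<in>UNIV. Q a b * Q c d * of_bool (a = c \<and> b = d))
      = (\<Sum>a\<in>UNIV. \<Sum>b\<in>UNIV. (Q a b)\<^sup>2)"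
    by (simp add: sum.delta sum.delta' power2_eq_square)
  have "(\<Sum>a\<in>UNIV. \<Sum>b\<in>UNIV. \<Sum>c\<in>UNIV. \<Sum>d\<in>UNIV. Q a b * Q c d * of_bool (a = d \<and> b = c))
      = (\<Sum>a\<in>UNIV. \<Sum>b\<in>UNIV. \<Sum>c\<in>UNIV. if b = c then (\<Sum>d\<in>UNIV. if a = d then Q a b * Q c d else 0) else 0)"
    by (intro sum.cong refl) auto
  then have transposed_term: "(\<Sum>a\<in>UNIV. \<Sum>b\<in>UNIV. \<Sum>c\<in>UNIV. \<Sum>d\<in>UNIV. Q a b * Q c d * of_bool (a = d \<and> b = c))
      = (\<Sum>a\<in>UNIV. \<Sum>b\<in>UNIV. (Q a b)\<^sup>2)"
    using symmetric by (simp add: sum.delta sum.delta' power2_eq_square)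
  show ?thesis
    unfolding distrib_left sum.distrib trace_term square_term transposed_term by simp
qed

lemma square_quadratic_form:
  "(\<Sum>a\<in>A. \<Sum>b\<in>A. Q a b * z a * z b :: real)\<^sup>2 =
     (\<Sum>a\<in>A. \<Sum>b\<in>A. \<Sum>c\<in>A. \<Sum>d\<in>A. Q a b * Q c d * (z a * z b * z c * z d))"
proof -
  have "(\<Sum>a\<in>A. \<Sum>b\<in>A. Q a b * z a * z b)\<^sup>2 =
      (\<Sum>a\<in>A. \<Sum>b\<in>A. (Q a b * z a * z b) * (\<Sum>c\<in>A. \<Sum>d\<in>A. Q c d * z c * z d))"
    by (simp add: power2_eq_square sum_distrib_right)
  also have "\<dots> = (\<Sum>a\<in>A. \<Sum>b\<in>A. \<Sum>c\<in>A. \<Sum>d\<in>A. (Q a b * z a * z b) * (Q c d * z c * z d))"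
    by (simp add: sum_distrib_left)
  finally show ?thesis
    by (simp add: mult_ac)
qed

lemma sum_square_linear_forms:
  fixes C :: "'j::finite \<Rightarrow> 'k::finite \<Rightarrow> real"
  shows "(\<Sum>j\<in>UNIV. (\<Sum>a\<in>UNIV. C j a * z a)\<^sup>2) =
    (\<Sum>a\<in>UNIV. \<Sum>b\<in>UNIV. (\<Sum>j\<in>UNIV. C j a * C j b) * z a * z b)"
proof -
  have "(\<Sum>j\<in>UNIV. (\<Sum>a\<in>UNIV. C j a * z a)\<^sup>2) =
      (\<Sum>j\<in>UNIV. \<Sum>a\<in>UNIV. \<Sum>b\<in>UNIV. (C j a * z a) * (C j b * z b))"
    by (simp add: power2_eq_square sum_product)
  also have "\<dots> = (\<Sum>a\<in>UNIV. \<Sum>b\<in>UNIV. \<Sum>j\<in>UNIV. (C j a * z a) * (C j b * z b))"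
    by (subst sum.swap, rule sum.cong[OF refl], rule sum.swap)
  also have "\<dots> = (\<Sum>a\<in>UNIV. \<Sum>b\<in>UNIV. (\<Sum>j\<in>UNIV. C j a * C j b) * z a * z b)"
    unfolding sum_distrib_right by (simp add: mult_ac)
  finally show ?thesis .
qed

lemma sum_square_gram_entries:
  fixes C :: "'j::finite \<Rightarrow> 'k::finite \<Rightarrow> real"
  shows "(\<Sum>a\<in>UNIV. \<Sum>b\<in>UNIV. (\<Sum>j\<in>UNIV. C j a * C j b)\<^sup>2) =
    (\<Sum>j\<in>UNIV. \<Sum>l\<in>UNIV. (\<Sum>a\<in>UNIV. C j a * C l a)\<^sup>2)"
proof -
  have "(\<Sum>a\<in>UNIV. \<Sum>b\<in>UNIV. (\<Sum>j\<in>UNIV. C j a * C j b)\<^sup>2) =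
      (\<Sum>a\<in>UNIV. \<Sum>b\<in>UNIV. \<Sum>j\<in>UNIV. \<Sum>l\<in>UNIV. (C j a * C l a) * (C j b * C l b))"
    by (simp add: power2_eq_square sum_product mult_ac)
  also have "\<dots> = (\<Sum>a\<in>UNIV. \<Sum>j\<in>UNIV. \<Sum>l\<in>UNIV. \<Sum>b\<in>UNIV. (C j a * C l a) * (C j b * C l b))"
    by (intro sum.cong refl trans[OF sum.swap])
  also have "\<dots> = (\<Sum>j\<in>UNIV. \<Sum>l\<in>UNIV. \<Sum>a\<in>UNIV. \<Sum>b\<in>UNIV. (C j a * C l a) * (C j b * C l b))"
    by (subst sum.swap) (intro sum.cong refl sum.swap)
  also have "\<dots> = (\<Sum>j\<in>UNIV. \<Sum>l\<in>UNIV. (\<Sum>a\<in>UNIV. C j a * C l a)\<^sup>2)"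
    by (simp add: power2_eq_square sum_product)
  finally show ?thesis .
qed

lemma sum_square_entries_add_mat_1:
  fixes K :: "real^'n::finite^'n"
  assumes "transpose K = K"
  shows "(\<Sum>j\<in>UNIV. \<Sum>l\<in>UNIV. ((K + mat 1) $ j $ l)\<^sup>2) = trace (K ** K) + 2 * trace K + real CARD('n)"
proof -
  have symmetric: "K $ l $ j = K $ j $ l" for j l
    using assms by (metis transpose_def vec_lambda_beta)
  have "((K + mat 1) $ j $ l)\<^sup>2 = K $ j $ l * K $ l $ j + of_bool (j = l) * (2 * K $ j $ j + 1)" for j l
    by (cases "j = l") (simp_all add: mat_def symmetric power2_eq_square algebra_simps)
  then show ?thesis
    by (simp add: trace_def matrix_matrix_mult_def sum.distrib sum_distrib_left)
qed

definition centered_normal :: "real \<Rightarrow> real measure" where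
  "centered_normal \<sigma> = density lborel (normal_density 0 \<sigma>)"

lemma sets_centered_normal [simp, measurable_cong]: "sets (centered_normal \<sigma>) = sets borel"
  by (simp add: centered_normal_def)

context
  fixes \<sigma> :: real
  assumes \<sigma>_pos: "0 < \<sigma>"
begin

lemma prob_space_centered_normal: "prob_space (centered_normal \<sigma>)"
  unfolding centered_normal_def using prob_space_normal_density[OF \<sigma>_pos] by simp

lemma integrable_centered_normal_power: "integrable (centered_normal \<sigma>) (\<lambda>t. t ^ k)"
  unfolding centered_normal_def
  by (subst integrable_density) (use integrable_normal_moment[OF \<sigma>_pos, of 0 k] in auto)

lemma centered_normal_moments:
  "(\<integral>t. t ^ 0 \<partial>centered_normal \<sigma>) = 1"
  "(\<integral>t. t ^ 1 \<partial>centered_normal \<sigma>) = 0"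
  "(\<integral>t. t ^ 2 \<partial>centered_normal \<sigma>) = \<sigma>\<^sup>2"
  "(\<integral>t. t ^ 3 \<partial>centered_normal \<sigma>) = 0"
  "(\<integral>t. t ^ 4 \<partial>centered_normal \<sigma>) = 3 * \<sigma> ^ 4"
proof -
  have integral_centered_normal_power:
    "(\<integral>t. t ^ k \<partial>centered_normal \<sigma>) = (\<integral>t. normal_density 0 \<sigma> t * (t - 0) ^ k \<partial>lborel)" for k
    unfolding centered_normal_def by (subst integral_density) auto
  note even = integral_normal_moment_even[OF \<sigma>_pos, of 0] and odd = integral_normal_moment_odd[OF \<sigma>_pos, of 0]
  show "(\<integral>t. t ^ 0 \<partial>centered_normal \<sigma>) = 1"
    using prob_space.prob_space[OF prob_space_centered_normal] by simp
  show "(\<integral>t. t ^ 1 \<partial>centered_normal \<sigma>) = 0"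
    using odd[of 0] unfolding integral_centered_normal_power by simp
  show "(\<integral>t. t ^ 2 \<partial>centered_normal \<sigma>) = \<sigma>\<^sup>2"
    using even[of 1] \<sigma>_pos unfolding integral_centered_normal_power by (simp add: numeral_eq_Suc)
  show "(\<integral>t. t ^ 3 \<partial>centered_normal \<sigma>) = 0"
    using odd[of 1] unfolding integral_centered_normal_power by (simp add: numeral_eq_Suc)
  have "(\<integral>t. t ^ 4 \<partial>centered_normal \<sigma>) = fact 4 / ((2 / \<sigma>\<^sup>2)\<^sup>2 * fact 2)"
    using even[of 2] unfolding integral_centered_normal_power by simp
  also have "\<dots> = 3 * \<sigma> ^ 4"
    using \<sigma>_pos by (simp add: fact_numeral field_simps power2_eq_square power4_eq_xxxx)
  finally show "(\<integral>t. t ^ 4 \<partial>centered_normal \<sigma>) = 3 * \<sigma> ^ 4" .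
qed

lemma product_prob_space_centered_normal: "product_prob_space (\<lambda>_::'k. centered_normal \<sigma>)"
  by (rule product_prob_spaceI) (rule prob_space_centered_normal)

text \<open>Isserlis' theorem for independent centred Gaussians: the product is written as
  \<open>\<Prod>k. z k ^ c k\<close>, where \<open>c k\<close> counts the occurrences of \<open>k\<close> among \<open>a, b, c, d\<close>.\<close>

lemma
  fixes a b c d :: "'k::finite"
  shows integrable_PiM_centered_normal_four:
      "integrable (PiM UNIV (\<lambda>_::'k. centered_normal \<sigma>)) (\<lambda>z. z a * z b * z c * z d)"
    and integral_PiM_centered_normal_four:
      "(\<integral>z. z a * z b * z c * z d \<partial>PiM UNIV (\<lambda>_::'k. centered_normal \<sigma>)) =
        \<sigma> ^ 4 * (of_bool (a = b \<and> c = d) + of_bool (a = c \<and> b = d) + of_bool (a = d \<and> b = c))"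
proof -
  interpret product_prob_space "\<lambda>_::'k. centered_normal \<sigma>"
    by (rule product_prob_space_centered_normal)
  define cnt :: "'k \<Rightarrow> nat" where "cnt k = of_bool (a = k) + of_bool (b = k) + of_bool (c = k) + of_bool (d = k)" for k
  define mom where "mom k = (\<integral>t. t ^ k \<partial>centered_normal \<sigma>)" for k
  have mom: "mom 0 = 1" "mom 1 = 0" "mom 2 = \<sigma>\<^sup>2" "mom 3 = 0" "mom 4 = 3 * \<sigma> ^ 4"
    unfolding mom_def by (fact centered_normal_moments)+
  then have mom_Suc: "mom (Suc 0) = 0" "mom (Suc (Suc 0)) = \<sigma>\<^sup>2" "mom (Suc (Suc (Suc 0))) = 0"
    "mom (Suc (Suc (Suc (Suc 0)))) = 3 * \<sigma> ^ 4"
    by (simp_all add: numeral_eq_Suc)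
  have prod: "z a * z b * z c * z d = (\<Prod>k\<in>UNIV. z k ^ cnt k)" for z :: "'k \<Rightarrow> real"
    unfolding cnt_def power_add prod.distrib prod_power_of_bool_eq ..
  show "integrable (PiM UNIV (\<lambda>_::'k. centered_normal \<sigma>)) (\<lambda>z. z a * z b * z c * z d)"
    unfolding prod by (rule product_integrable_prod) (auto intro: integrable_centered_normal_power)
  have "(\<integral>z. z a * z b * z c * z d \<partial>PiM UNIV (\<lambda>_::'k. centered_normal \<sigma>))
      = (\<Prod>k\<in>UNIV. mom (cnt k))"
    unfolding prod mom_def by (rule product_integral_prod) (auto intro: integrable_centered_normal_power)
  also have "\<dots> = (\<Prod>k\<in>{a, b, c, d}. mom (cnt k))"
    by (rule prod.mono_neutral_right) (auto simp: cnt_def mom)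
  also have "\<dots> = \<sigma> ^ 4 * (of_bool (a = b \<and> c = d) + of_bool (a = c \<and> b = d) + of_bool (a = d \<and> b = c))"
    by (cases "a = b"; cases "a = c"; cases "a = d"; cases "b = c"; cases "b = d"; cases "c = d")
       (simp_all add: cnt_def mom mom_Suc power4_eq_xxxx power2_eq_square insert_commute)
  finally show "(\<integral>z. z a * z b * z c * z d \<partial>PiM UNIV (\<lambda>_::'k. centered_normal \<sigma>)) =
      \<sigma> ^ 4 * (of_bool (a = b \<and> c = d) + of_bool (a = c \<and> b = d) + of_bool (a = d \<and> b = c))" .
qed

lemma
  fixes Q :: "'k::finite \<Rightarrow> 'k \<Rightarrow> real"
  assumes symmetric: "\<And>a b. Q a b = Q b a"
  shows integrable_PiM_centered_normal_quadratic_form_square: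
      "integrable (PiM UNIV (\<lambda>_::'k. centered_normal \<sigma>)) (\<lambda>z. (\<Sum>a\<in>UNIV. \<Sum>b\<in>UNIV. Q a b * z a * z b)\<^sup>2)"
    and integral_PiM_centered_normal_quadratic_form_square:
      "(\<integral>z. (\<Sum>a\<in>UNIV. \<Sum>b\<in>UNIV. Q a b * z a * z b)\<^sup>2 \<partial>PiM UNIV (\<lambda>_::'k. centered_normal \<sigma>)) =
        \<sigma> ^ 4 * ((\<Sum>a\<in>UNIV. Q a a)\<^sup>2 + 2 * (\<Sum>a\<in>UNIV. \<Sum>b\<in>UNIV. (Q a b)\<^sup>2))"
proof -
  note four = integrable_PiM_centered_normal_four integral_PiM_centered_normal_four
  show "integrable (PiM UNIV (\<lambda>_::'k. centered_normal \<sigma>)) (\<lambda>z. (\<Sum>a\<in>UNIV. \<Sum>b\<in>UNIV. Q a b * z a * z b)\<^sup>2)"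
    unfolding square_quadratic_form by (intro Bochner_Integration.integrable_sum integrable_mult_right four)
  show "(\<integral>z. (\<Sum>a\<in>UNIV. \<Sum>b\<in>UNIV. Q a b * z a * z b)\<^sup>2 \<partial>PiM UNIV (\<lambda>_::'k. centered_normal \<sigma>)) =
      \<sigma> ^ 4 * ((\<Sum>a\<in>UNIV. Q a a)\<^sup>2 + 2 * (\<Sum>a\<in>UNIV. \<Sum>b\<in>UNIV. (Q a b)\<^sup>2))"
  proof -
    have "(\<integral>z. (\<Sum>a\<in>UNIV. \<Sum>b\<in>UNIV. Q a b * z a * z b)\<^sup>2 \<partial>PiM UNIV (\<lambda>_::'k. centered_normal \<sigma>)) =
        (\<Sum>a\<in>UNIV. \<Sum>b\<in>UNIV. \<Sum>c\<in>UNIV. \<Sum>d\<in>UNIV. Q a b * Q c d *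
          (\<sigma> ^ 4 * (of_bool (a = b \<and> c = d) + of_bool (a = c \<and> b = d) + of_bool (a = d \<and> b = c))))"
      unfolding square_quadratic_form
      by (simp add: Bochner_Integration.integral_sum Bochner_Integration.integrable_sum
          integrable_mult_right four del: of_bool_conj)
    also have "\<dots> = \<sigma> ^ 4 * (\<Sum>a\<in>UNIV. \<Sum>b\<in>UNIV. \<Sum>c\<in>UNIV. \<Sum>d\<in>UNIV. Q a b * Q c d *
          (of_bool (a = b \<and> c = d) + of_bool (a = c \<and> b = d) + of_bool (a = d \<and> b = c)))"
      by (simp add: sum_distrib_left mult_ac del: of_bool_conj)
    finally show ?thesis
      unfolding sum_pairings_quadratic[OF symmetric] .
  qed
qed

lemma
  fixes C :: "'j::finite \<Rightarrow> 'k::finite \<Rightarrow> real"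
  shows integrable_PiM_centered_normal_sum_squares_square:
      "integrable (PiM UNIV (\<lambda>_::'k. centered_normal \<sigma>)) (\<lambda>z. (\<Sum>j\<in>UNIV. (\<Sum>a\<in>UNIV. C j a * z a)\<^sup>2)\<^sup>2)"
    and integral_PiM_centered_normal_sum_squares_square:
      "(\<integral>z. (\<Sum>j\<in>UNIV. (\<Sum>a\<in>UNIV. C j a * z a)\<^sup>2)\<^sup>2 \<partial>PiM UNIV (\<lambda>_::'k. centered_normal \<sigma>)) =
        \<sigma> ^ 4 * ((\<Sum>j\<in>UNIV. \<Sum>a\<in>UNIV. (C j a)\<^sup>2)\<^sup>2 + 2 * (\<Sum>j\<in>UNIV. \<Sum>l\<in>UNIV. (\<Sum>a\<in>UNIV. C j a * C l a)\<^sup>2))"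
proof -
  define Q where "Q a b = (\<Sum>j\<in>UNIV. C j a * C j b)" for a b
  have symmetric: "Q a b = Q b a" for a b
    unfolding Q_def by (simp add: mult.commute)
  have trace: "(\<Sum>a\<in>UNIV. Q a a) = (\<Sum>j\<in>UNIV. \<Sum>a\<in>UNIV. (C j a)\<^sup>2)"
    unfolding Q_def power2_eq_square by (rule sum.swap)
  have quadratic: "(\<Sum>j\<in>UNIV. (\<Sum>a\<in>UNIV. C j a * z a)\<^sup>2) = (\<Sum>a\<in>UNIV. \<Sum>b\<in>UNIV. Q a b * z a * z b)" for z
    unfolding Q_def by (rule sum_square_linear_forms)
  show "integrable (PiM UNIV (\<lambda>_::'k. centered_normal \<sigma>)) (\<lambda>z. (\<Sum>j\<in>UNIV. (\<Sum>a\<in>UNIV. C j a * z a)\<^sup>2)\<^sup>2)"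
    unfolding quadratic by (rule integrable_PiM_centered_normal_quadratic_form_square[OF symmetric])
  show "(\<integral>z. (\<Sum>j\<in>UNIV. (\<Sum>a\<in>UNIV. C j a * z a)\<^sup>2)\<^sup>2 \<partial>PiM UNIV (\<lambda>_::'k. centered_normal \<sigma>)) =
      \<sigma> ^ 4 * ((\<Sum>j\<in>UNIV. \<Sum>a\<in>UNIV. (C j a)\<^sup>2)\<^sup>2 + 2 * (\<Sum>j\<in>UNIV. \<Sum>l\<in>UNIV. (\<Sum>a\<in>UNIV. C j a * C l a)\<^sup>2))"
    unfolding quadratic integral_PiM_centered_normal_quadratic_form_square[OF symmetric] trace
    unfolding Q_def by (subst sum_square_gram_entries) (rule refl)
qed

text \<open>The residual vector \<open>z\<^sub>2 - H z\<^sub>1\<close> is \<open>C z\<close> for the block matrix \<open>C = [-H | I]\<close>,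
  whose Gram matrix is \<open>C C' = I + H H'\<close>.\<close>

lemma
  fixes H :: "real^'n::finite^'m::finite"
  defines "S \<equiv> \<lambda>z::'n + 'm \<Rightarrow> real.
    ((1 / real CARD('m)) * (\<Sum>j\<in>UNIV. (z (Inr j) - (\<Sum>i\<in>UNIV. H $ j $ i * z (Inl i)))\<^sup>2))\<^sup>2"
  shows integrable_PiM_centered_normal_mean_square_residual_square:
      "integrable (PiM UNIV (\<lambda>_. centered_normal \<sigma>)) S"
    and integral_PiM_centered_normal_mean_square_residual_square:
      "(\<integral>z. S z \<partial>PiM UNIV (\<lambda>_. centered_normal \<sigma>)) = \<sigma> ^ 4 / (real CARD('m))\<^sup>2 *
        ((real CARD('m) + trace (H ** transpose H))\<^sup>2
          + 2 * (trace ((H ** transpose H) ** (H ** transpose H)) + 2 * trace (H ** transpose H) + real CARD('m)))"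
proof -
  define C where "C j a = (case a of Inl i \<Rightarrow> - (H $ j $ i) | Inr l \<Rightarrow> of_bool (l = j))" for j a
  have sum_Plus: "(\<Sum>a\<in>UNIV. g a) = (\<Sum>i\<in>UNIV. g (Inl i)) + (\<Sum>j\<in>UNIV. g (Inr j))"
    for g :: "'n + 'm \<Rightarrow> real"
    using sum.Plus[of "UNIV :: 'n set" "UNIV :: 'm set" g] by (simp add: UNIV_Plus_UNIV comp_def)
  have residual: "(\<Sum>a\<in>UNIV. C j a * z a) = z (Inr j) - (\<Sum>i\<in>UNIV. H $ j $ i * z (Inl i))" for j z
    by (simp add: sum_Plus C_def sum_negf)
  have gram: "(\<Sum>a\<in>UNIV. C j a * C l a) = (H ** transpose H + mat 1) $ j $ l" for j l
    by (simp add: sum_Plus C_def matrix_matrix_mult_def transpose_def mat_def)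
  have S_eq: "S z = (1 / real CARD('m))\<^sup>2 * (\<Sum>j\<in>UNIV. (\<Sum>a\<in>UNIV. C j a * z a)\<^sup>2)\<^sup>2" for z
    unfolding S_def residual power_mult_distrib ..
  have "(\<Sum>j\<in>UNIV. \<Sum>a\<in>UNIV. (C j a)\<^sup>2) = trace (H ** transpose H + mat 1)"
    by (simp add: power2_eq_square gram trace_def)
  moreover have symmetric: "transpose (H ** transpose H) = H ** transpose H"
    by (simp add: matrix_transpose_mul)
  ultimately show "(\<integral>z. S z \<partial>PiM UNIV (\<lambda>_. centered_normal \<sigma>)) = \<sigma> ^ 4 / (real CARD('m))\<^sup>2 *
        ((real CARD('m) + trace (H ** transpose H))\<^sup>2
          + 2 * (trace ((H ** transpose H) ** (H ** transpose H)) + 2 * trace (H ** transpose H) + real CARD('m)))"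
    unfolding S_eq integral_mult_right_zero integral_PiM_centered_normal_sum_squares_square gram
      sum_square_entries_add_mat_1[OF symmetric]
    by (simp add: power_divide add.commute trace_add trace_I)
  show "integrable (PiM UNIV (\<lambda>_. centered_normal \<sigma>)) S"
    unfolding S_eq[abs_def] by (rule integrable_mult_right) (rule integrable_PiM_centered_normal_sum_squares_square[where C=C])
qed

end

lemma
  fixes A :: "'a::comm_semiring_1^'n^'n"
  assumes "invertible A"
  shows matrix_inv_right: "A ** matrix_inv A = mat 1"
    and matrix_inv_left: "matrix_inv A ** A = mat 1"
proof -
  from assms obtain A' where "A ** A' = mat 1 \<and> A' ** A = mat 1"
    unfolding invertible_def by blast
  then have "A ** matrix_inv A = mat 1 \<and> matrix_inv A ** A = mat 1"
    unfolding matrix_inv_def by (rule someI)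
  then show "A ** matrix_inv A = mat 1" and "matrix_inv A ** A = mat 1"
    by auto
qed

lemma invertible_transpose_mult_self:
  fixes F :: "real^'p::finite^'n::finite"
  assumes "rank F = CARD('p)"
  shows "invertible (transpose F ** F)"
proof -
  have "x = 0" if "(transpose F ** F) *v x = 0" for x
  proof -
    have "(F *v x) \<bullet> (F *v x) = ((F *v x) v* F) \<bullet> x"
      by (simp add: dot_lmul_matrix)
    also have "\<dots> = x \<bullet> ((transpose F ** F) *v x)"
      by (simp add: inner_commute flip: matrix_vector_mul_assoc)
    finally have "F *v x = 0"
      using that by simp
    then show "x = 0"
      using full_rank_injective[of F] assms by (metis matrix_vector_mult_0_right injD)
  qed
  then have "inj ((*v) (transpose F ** F))"
    by (simp add: linear_injective_0 matrix_vector_mul_linear)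
  then obtain B where B: "B ** (transpose F ** F) = mat 1"
    using matrix_left_invertible_injective by blast
  then have "(transpose F ** F) ** B = mat 1"
    using matrix_left_right_inverse by blast
  with B show ?thesis
    unfolding invertible_def by blast
qed

lemma trace_scaleR: "trace (c *\<^sub>R A) = c * trace (A :: real^'n::finite^'n)"
  by (simp add: trace_def sum_distrib_left)

definition ols_prediction_matrix :: "real^'p^'n \<Rightarrow> real^'p^'m \<Rightarrow> real^'n^'m" where
  "ols_prediction_matrix Fx Fu = Fu ** (matrix_inv (transpose Fx ** Fx) ** transpose Fx)"

lemma inner_design_eq_mult: "f (xs i) \<bullet> b = (design f xs *v b) $ i"
  by (simp add: design_def matrix_vector_mult_def inner_vec_def mult.commute)

lemma test_error_ols_linear_model:
  fixes f :: "'d \<Rightarrow> real^'p::finite" and xs :: "'n::finite \<Rightarrow> 'd" and us :: "'m::finite \<Rightarrow> 'd"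
  assumes "invertible (transpose (design f xs) ** design f xs :: real^'p^'p)"
  shows "test_error f us (\<lambda>j. f (us j) \<bullet> \<beta> + \<epsilon> j) (ols (design f xs :: real^'p^'n) (\<chi> i. f (xs i) \<bullet> \<beta> + e i))
    = (1 / real CARD('m)) *
      (\<Sum>j\<in>UNIV. (\<epsilon> j - (\<Sum>i\<in>UNIV. ols_prediction_matrix (design f xs) (design f us) $ j $ i * e i))\<^sup>2)"
proof -
  define Fx :: "real^'p^'n" where "Fx = design f xs"
  define L where "L = matrix_inv (transpose Fx ** Fx) ** transpose Fx"
  have "L ** Fx = mat 1"
    using matrix_inv_left[OF assms] by (simp add: L_def Fx_def matrix_mul_assoc)
  have "(\<chi> i. f (xs i) \<bullet> \<beta> + e i) = Fx *v \<beta> + (\<chi> i. e i)"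
    by (simp add: Fx_def vec_eq_iff inner_design_eq_mult[of f xs])
  then have "ols Fx (\<chi> i. f (xs i) \<bullet> \<beta> + e i) = L *v (Fx *v \<beta> + (\<chi> i. e i))"
    by (simp add: ols_def L_def)
  also have "\<dots> = \<beta> + L *v (\<chi> i. e i)"
    using \<open>L ** Fx = mat 1\<close> by (simp add: matrix_vector_right_distrib matrix_vector_mul_assoc)
  finally have "ols Fx (\<chi> i. f (xs i) \<bullet> \<beta> + e i) = \<beta> + L *v (\<chi> i. e i)" .
  moreover have "f (us j) \<bullet> (L *v (\<chi> i. e i)) = (\<Sum>i\<in>UNIV. ols_prediction_matrix Fx (design f us) $ j $ i * e i)"
    for j
  proof -
    have "f (us j) \<bullet> (L *v (\<chi> i. e i)) = (design f us *v (L *v (\<chi> i. e i))) $ j"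
      by (rule inner_design_eq_mult)
    then show ?thesis
      unfolding matrix_vector_mul_assoc ols_prediction_matrix_def L_def[symmetric]
      by (simp add: matrix_vector_mult_def)
  qed
  ultimately show ?thesis
    by (simp add: test_error_def inner_add_right Fx_def)
qed

lemma transpose_matrix_inv_left:
  fixes A :: "'a::comm_semiring_1^'n^'n"
  assumes "transpose A = A" "invertible A"
  shows "transpose (matrix_inv A) ** A = mat 1"
  using matrix_inv_right[OF assms(2)] assms(1)
  by (metis matrix_transpose_mul transpose_mat)

lemma ols_prediction_matrix_mult_transpose:
  fixes Fx :: "real^'p::finite^'n::finite" and Fu :: "real^'p^'m::finite"
  assumes "invertible (transpose Fx ** Fx)"
  shows "ols_prediction_matrix Fx Fu ** transpose (ols_prediction_matrix Fx Fu) =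
    Fu ** transpose (matrix_inv (transpose Fx ** Fx)) ** transpose Fu"
proof -
  define Gi where "Gi = matrix_inv (transpose Fx ** Fx)"
  have "ols_prediction_matrix Fx Fu ** transpose (ols_prediction_matrix Fx Fu) =
      Fu ** (Gi ** transpose Fx) ** (Fx ** transpose Gi ** transpose Fu)"
    unfolding ols_prediction_matrix_def Gi_def[symmetric] by (simp add: matrix_transpose_mul matrix_mul_assoc)
  also have "\<dots> = Fu ** (Gi ** (transpose Fx ** Fx)) ** transpose Gi ** transpose Fu"
    by (simp add: matrix_mul_assoc)
  finally show ?thesis
    using matrix_inv_left[OF assms] by (simp add: Gi_def)
qed

text \<open>Under the matched split \<open>F\<^sub>u' F\<^sub>u = c F\<^sub>x' F\<^sub>x\<close> with \<open>c = m / n\<close>, the matrix \<open>K = H H'\<close>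
  equals \<open>F\<^sub>u G\<^sup>-\<^sup>1 F\<^sub>u'\<close> for \<open>G = F\<^sub>x' F\<^sub>x\<close>, so \<open>K\<^sup>2 = c K\<close> and \<open>tr K = c tr(G\<^sup>-\<^sup>1 G) = c p\<close>.\<close>

lemma
  fixes Fx :: "real^'p::finite^'n::finite" and Fu :: "real^'p^'m::finite"
  assumes invertible: "invertible (transpose Fx ** Fx)"
    and matched: "(1 / real CARD('n)) *\<^sub>R (transpose Fx ** Fx) = (1 / real CARD('m)) *\<^sub>R (transpose Fu ** Fu)"
  defines "K \<equiv> ols_prediction_matrix Fx Fu ** transpose (ols_prediction_matrix Fx Fu)"
  shows trace_ols_prediction_matched: "trace K = real CARD('m) / real CARD('n) * real CARD('p)"
    and trace_square_ols_prediction_matched: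
      "trace (K ** K) = (real CARD('m) / real CARD('n))\<^sup>2 * real CARD('p)"
proof -
  define G where "G = transpose Fx ** Fx"
  define Gi where "Gi = matrix_inv G"
  define c where "c = real CARD('m) / real CARD('n)"
  have Gi'_G: "transpose Gi ** G = mat 1"
    unfolding Gi_def G_def by (rule transpose_matrix_inv_left) (simp_all add: invertible matrix_transpose_mul)
  have Fu'_Fu: "transpose Fu ** Fu = c *\<^sub>R G"
  proof -
    have "real CARD('m) *\<^sub>R ((1 / real CARD('n)) *\<^sub>R G) = real CARD('m) *\<^sub>R ((1 / real CARD('m)) *\<^sub>R (transpose Fu ** Fu))"
      using matched by (simp add: G_def)
    then show ?thesis
      by (simp add: c_def)
  qed
  have K_eq: "K = Fu ** transpose Gi ** transpose Fu"
    unfolding K_def Gi_def G_def by (rule ols_prediction_matrix_mult_transpose[OF invertible])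
  have "trace K = trace (Fu ** (transpose Gi ** transpose Fu))"
    unfolding K_eq by (simp only: matrix_mul_assoc)
  also have "\<dots> = trace ((transpose Gi ** transpose Fu) ** Fu)"
    by (rule trace_mul_sym)
  also have "\<dots> = trace (transpose Gi ** (c *\<^sub>R G))"
    by (simp only: matrix_mul_assoc[symmetric] Fu'_Fu)
  also have "\<dots> = c * trace (transpose Gi ** G)"
    by (simp only: matrix_scalar_ac scalar_matrix_assoc[symmetric] trace_scaleR)
  finally have trace_K: "trace K = c * real CARD('p)"
    by (simp add: Gi'_G trace_I)
  have "K ** K = c *\<^sub>R (Fu ** (transpose Gi ** G) ** transpose Gi ** transpose Fu)"
  proof -
    have "K ** K = Fu ** transpose Gi ** (transpose Fu ** Fu) ** transpose Gi ** transpose Fu"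
      unfolding K_eq by (simp add: matrix_mul_assoc)
    then show ?thesis
      unfolding Fu'_Fu by (simp only: matrix_mul_assoc matrix_scalar_ac scalar_matrix_assoc[symmetric])
  qed
  then have "K ** K = c *\<^sub>R K"
    by (simp add: Gi'_G K_eq)
  then show "trace (K ** K) = (real CARD('m) / real CARD('n))\<^sup>2 * real CARD('p)"
    by (simp add: trace_scaleR trace_K c_def power2_eq_square)
  show "trace K = real CARD('m) / real CARD('n) * real CARD('p)"
    using trace_K by (simp add: c_def)
qed

text \<open>On singular matrices \<open>matrix_inv\<close> is the junk value \<open>matrix_inv 0\<close>, since both are
  \<open>SOME\<close> of the same unsatisfiable predicate.\<close>

lemma matrix_inv_nth_cramer:
  fixes A :: "real^'n::finite^'n"
  shows "matrix_inv A $ k $ j =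
    (if det A \<noteq> 0 then det (\<chi> a b. if b = k then of_bool (a = j) else A $ a $ b) / det A
     else matrix_inv (0::real^'n^'n) $ k $ j)"
proof (cases "det A = 0")
  case False
  then have inv: "invertible A"
    by (simp add: invertible_det_nz)
  define e :: "real^'n" where "e = (\<chi> a. of_bool (a = j))"
  have "A *v (\<chi> k. matrix_inv A $ k $ j) = e"
    using matrix_inv_right[OF inv]
    by (simp add: e_def vec_eq_iff matrix_vector_mult_def matrix_matrix_mult_def mat_def)
  then have "matrix_inv A $ k $ j = det (\<chi> a b. if b = k then e $ a else A $ a $ b) / det A"
    using cramer[OF False] by (simp add: vec_eq_iff)
  also have "(\<chi> a b. if b = k then e $ a else A $ a $ b) = (\<chi> a b. if b = k then of_bool (a = j) else A $ a $ b)"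
    by (simp add: e_def vec_eq_iff)
  finally show ?thesis
    using False by simp
next
  case True
  have not_invertible_0: "\<not> invertible (0::real^'n^'n)"
    using det_0 by (simp add: invertible_det_nz mat_0)
  have "\<not> invertible A"
    using True by (simp add: invertible_det_nz)
  then have "matrix_inv A = matrix_inv (0::real^'n^'n)"
    using not_invertible_0 unfolding matrix_inv_def invertible_def by metis
  then show ?thesis
    using True by simp
qed

lemma borel_measurable_det:
  assumes [measurable]: "\<And>a b. (\<lambda>x. A x $ a $ b) \<in> borel_measurable M"
  shows "(\<lambda>x. det (A x) :: real) \<in> borel_measurable M"
  unfolding det_def by measurable

lemma borel_measurable_matrix_inv_nth:
  fixes A :: "'x \<Rightarrow> real^'n::finite^'n"
  assumes [measurable]: "\<And>a b. (\<lambda>x. A x $ a $ b) \<in> borel_measurable M"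
  shows "(\<lambda>x. matrix_inv (A x) $ k $ j) \<in> borel_measurable M"
proof -
  have [measurable]: "(\<lambda>x. det (A x)) \<in> borel_measurable M"
    by (rule borel_measurable_det) measurable
  have [measurable]: "(\<lambda>x. det (\<chi> a b. if b = k then of_bool (a = j) else A x $ a $ b)) \<in> borel_measurable M"
    by (rule borel_measurable_det) (simp only: vec_lambda_beta, measurable)
  show ?thesis
    by (subst matrix_inv_nth_cramer) measurable
qed

lemma ols_nth:
  "ols F y $ a = (\<Sum>i\<in>UNIV. (\<Sum>b\<in>UNIV. matrix_inv (transpose F ** F) $ a $ b * F $ i $ b) * y $ i)"
proof -
  define L where "L = matrix_inv (transpose F ** F)"
  show ?thesis
    unfolding ols_def L_def[symmetric]
    by (simp add: matrix_vector_mult_def matrix_matrix_mult_def transpose_def sum_distrib_right)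
qed

lemma borel_measurable_design_nth:
  fixes f :: "'d::euclidean_space \<Rightarrow> real^'p::finite" and X :: "'n::finite \<Rightarrow> 'x \<Rightarrow> 'd"
  assumes [measurable]: "f \<in> borel_measurable borel" "\<And>i. X i \<in> borel_measurable M"
  shows "(\<lambda>w. design f (\<lambda>i. X i w) $ i $ a) \<in> borel_measurable M"
  unfolding design_def vec_lambda_beta by (rule measurable_compose[OF _ borel_measurable_nth]) measurable

lemma borel_measurable_gram_nth:
  fixes f :: "'d::euclidean_space \<Rightarrow> real^'p::finite" and X :: "'n::finite \<Rightarrow> 'x \<Rightarrow> 'd"
  assumes "f \<in> borel_measurable borel" "\<And>i. X i \<in> borel_measurable M"
  shows "(\<lambda>w. (transpose (design f (\<lambda>i. X i w)) ** (design f (\<lambda>i. X i w) :: real^'p^'n)) $ a $ b)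
    \<in> borel_measurable M"
  using borel_measurable_design_nth[OF assms]
  unfolding matrix_matrix_mult_def transpose_def vec_lambda_beta by measurable

lemma borel_measurable_test_error_ols:
  fixes f :: "'d::euclidean_space \<Rightarrow> real^'p::finite"
    and X :: "'n::finite \<Rightarrow> 'x \<Rightarrow> 'd" and U :: "'m::finite \<Rightarrow> 'x \<Rightarrow> 'd"
  assumes [measurable]: "f \<in> borel_measurable borel"
    and [measurable]: "\<And>i. X i \<in> borel_measurable M" "\<And>i. Y i \<in> borel_measurable M"
      "\<And>j. U j \<in> borel_measurable M" "\<And>j. V j \<in> borel_measurable M"
  shows "(\<lambda>w. test_error f (\<lambda>j. U j w) (\<lambda>j. V j w) (ols (design f (\<lambda>i. X i w) :: real^'p^'n) (\<chi> i. Y i w)))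
    \<in> borel_measurable M"
proof -
  have [measurable]: "(\<lambda>w. design f (\<lambda>i. X i w) $ i $ a) \<in> borel_measurable M"
    "(\<lambda>w. design f (\<lambda>j. U j w) $ j $ a) \<in> borel_measurable M" for i j a
    by (rule borel_measurable_design_nth; fact)+
  have [measurable]: "(\<lambda>w. matrix_inv (transpose (design f (\<lambda>i. X i w)) **
      (design f (\<lambda>i. X i w) :: real^'p^'n)) $ a $ b) \<in> borel_measurable M" for a b
    by (rule borel_measurable_matrix_inv_nth, rule borel_measurable_gram_nth; fact)
  have U_row: "f (U j w) = design f (\<lambda>j. U j w) $ j" for j w
    by (simp add: design_def)
  show ?thesis
    unfolding test_error_def inner_vec_def ols_nth vec_lambda_beta U_row by measurable
qed

definition matched_split ::
    "('d \<Rightarrow> real^'p::finite) \<Rightarrow> ('n::finite \<Rightarrow> 'd) \<Rightarrow> ('m::finite \<Rightarrow> 'd) \<Rightarrow> bool" where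
  "matched_split f xs us \<longleftrightarrow>
    invertible (transpose (design f xs) ** (design f xs :: real^'p^'n)) \<and>
    (1 / real CARD('n)) *\<^sub>R (transpose (design f xs) ** (design f xs :: real^'p^'n)) =
    (1 / real CARD('m)) *\<^sub>R (transpose (design f us) ** (design f us :: real^'p^'m))"

lemma pred_matched_split:
  fixes f :: "'d::euclidean_space \<Rightarrow> real^'p::finite"
    and X :: "'n::finite \<Rightarrow> 'x \<Rightarrow> 'd" and U :: "'m::finite \<Rightarrow> 'x \<Rightarrow> 'd"
  assumes "f \<in> borel_measurable borel" "\<And>i. X i \<in> borel_measurable M" "\<And>j. U j \<in> borel_measurable M"
  shows "Measurable.pred M (\<lambda>w. matched_split f (\<lambda>i. X i w) (\<lambda>j. U j w))"
proof -
  note gram_X[measurable] = borel_measurable_gram_nth[where X=X, OF assms(1,2)]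
  note gram_U[measurable] = borel_measurable_gram_nth[where X=U, OF assms(1,3)]
  have "Measurable.pred M (\<lambda>w. det (transpose (design f (\<lambda>i. X i w)) ** (design f (\<lambda>i. X i w) :: real^'p^'n)) = 0)"
    unfolding pred_def by (intro measurable_equality_set borel_measurable_det gram_X measurable_const) simp
  moreover have "Measurable.pred M (\<lambda>w.
      ((1 / real CARD('n)) *\<^sub>R (transpose (design f (\<lambda>i. X i w)) ** (design f (\<lambda>i. X i w) :: real^'p^'n))) $ a $ b =
      ((1 / real CARD('m)) *\<^sub>R (transpose (design f (\<lambda>j. U j w)) ** (design f (\<lambda>j. U j w) :: real^'p^'m))) $ a $ b)"
    for a b
    unfolding pred_def vector_scaleR_component by (intro measurable_equality_set) measurable
  ultimately show ?thesis
    unfolding matched_split_def invertible_det_nz vec_eq_iff by (intro pred_intros_logic pred_intros_countable)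
qed

lemma
  fixes f :: "'d \<Rightarrow> real^'p::finite" and xs :: "'n::finite \<Rightarrow> 'd" and us :: "'m::finite \<Rightarrow> 'd"
    and \<beta> :: "real^'p"
  assumes \<sigma>_pos: "0 < \<sigma>" and matched_split: "matched_split f xs us"
  defines "S \<equiv> \<lambda>z::'n + 'm \<Rightarrow> real. (test_error f us (\<lambda>j. f (us j) \<bullet> \<beta> + z (Inr j))
      (ols (design f xs :: real^'p^'n) (\<chi> i. f (xs i) \<bullet> \<beta> + z (Inl i))))\<^sup>2"
  shows integrable_centered_normal_test_error_ols_square:
      "integrable (PiM UNIV (\<lambda>_. centered_normal \<sigma>)) S"
    and integral_centered_normal_test_error_ols_square:
      "(\<integral>z. S z \<partial>PiM UNIV (\<lambda>_. centered_normal \<sigma>)) = \<sigma> ^ 4 *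
        ((1 + real CARD('p) / real CARD('n))\<^sup>2 + 2 / real CARD('m)
          + 4 * real CARD('p) / (real CARD('m) * real CARD('n)) + 2 * real CARD('p) / (real CARD('n))\<^sup>2)"
proof -
  have invertible: "invertible (transpose (design f xs) ** (design f xs :: real^'p^'n))"
    and matched: "(1 / real CARD('n)) *\<^sub>R (transpose (design f xs) ** (design f xs :: real^'p^'n))
      = (1 / real CARD('m)) *\<^sub>R (transpose (design f us) ** (design f us :: real^'p^'m))"
    using matched_split unfolding matched_split_def by auto
  have arith: "s ^ 4 / m\<^sup>2 * ((m + m / n * p)\<^sup>2 + 2 * ((m / n)\<^sup>2 * p + 2 * (m / n * p) + m))
      = s ^ 4 * ((1 + p / n)\<^sup>2 + 2 / m + 4 * p / (m * n) + 2 * p / n\<^sup>2)" if "m > 0" "n > 0" for m n p s :: real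
    using that by (simp add: field_simps power2_eq_square)
  define H where "H = ols_prediction_matrix (design f xs :: real^'p^'n) (design f us :: real^'p^'m)"
  have S_eq: "S = (\<lambda>z. ((1 / real CARD('m)) * (\<Sum>j\<in>UNIV. (z (Inr j) - (\<Sum>i\<in>UNIV. H $ j $ i * z (Inl i)))\<^sup>2))\<^sup>2)"
    unfolding S_def H_def test_error_ols_linear_model[OF invertible] ..
  show "integrable (PiM UNIV (\<lambda>_. centered_normal \<sigma>)) S"
    unfolding S_eq by (rule integrable_PiM_centered_normal_mean_square_residual_square[OF \<sigma>_pos])
  show "(\<integral>z. S z \<partial>PiM UNIV (\<lambda>_. centered_normal \<sigma>)) = \<sigma> ^ 4 *
      ((1 + real CARD('p) / real CARD('n))\<^sup>2 + 2 / real CARD('m)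
        + 4 * real CARD('p) / (real CARD('m) * real CARD('n)) + 2 * real CARD('p) / (real CARD('n))\<^sup>2)"
    unfolding S_eq integral_PiM_centered_normal_mean_square_residual_square[OF \<sigma>_pos] H_def
      trace_ols_prediction_matched[OF invertible matched] trace_square_ols_prediction_matched[OF invertible matched]
    by (rule arith) simp_all
qed

lemma nn_integral_PiM_indicator_pairs:
  fixes A :: "'a measure" and B :: "'b measure"
  assumes "prob_space A" "prob_space B" "finite I"
    and F: "\<And>k. k \<in> I \<Longrightarrow> F k \<in> sets (A \<Otimes>\<^sub>M B)"
  shows "(\<integral>\<^sup>+ x. \<integral>\<^sup>+ e. (\<Prod>k\<in>I. indicator (F k) (x k, e k)) \<partial>PiM I (\<lambda>_. B) \<partial>PiM I (\<lambda>_. A))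
    = (\<Prod>k\<in>I. emeasure (A \<Otimes>\<^sub>M B) (F k))"
proof -
  interpret A: prob_space A by fact
  interpret B: prob_space B by fact
  interpret PA: product_prob_space "\<lambda>_. A"
    by (rule product_prob_spaceI) (rule A.prob_space_axioms)
  interpret PB: product_prob_space "\<lambda>_. B"
    by (rule product_prob_spaceI) (rule B.prob_space_axioms)
  have "(\<integral>\<^sup>+ x. \<integral>\<^sup>+ e. (\<Prod>k\<in>I. indicator (F k) (x k, e k)) \<partial>PiM I (\<lambda>_. B) \<partial>PiM I (\<lambda>_. A))
      = (\<integral>\<^sup>+ x. (\<Prod>k\<in>I. \<integral>\<^sup>+ b. indicator (F k) (x k, b) \<partial>B) \<partial>PiM I (\<lambda>_. A))"
  proof (intro nn_integral_cong PB.product_nn_integral_prod[OF \<open>finite I\<close>])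
    fix x k
    assume "x \<in> space (PiM I (\<lambda>_. A))" "k \<in> I"
    then have "x k \<in> space A"
      by (auto simp: space_PiM)
    then show "(\<lambda>b. indicator (F k) (x k, b)) \<in> borel_measurable B"
      using F[OF \<open>k \<in> I\<close>] by measurable
  qed
  also have "\<dots> = (\<Prod>k\<in>I. \<integral>\<^sup>+ a. \<integral>\<^sup>+ b. indicator (F k) (a, b) \<partial>B \<partial>A)"
    using F by (intro PA.product_nn_integral_prod[OF \<open>finite I\<close>] B.borel_measurable_nn_integral_fst) auto
  also have "\<dots> = (\<Prod>k\<in>I. emeasure (A \<Otimes>\<^sub>M B) (F k))"
    using F by (intro prod.cong refl B.emeasure_pair_measure[symmetric]) auto
  finally show ?thesis .
qed

lemma distr_PiM_pair_eq_PiM_pair_measure: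
  fixes A :: "'a measure" and B :: "'b measure"
  assumes "prob_space A" "prob_space B" "finite I"
  shows "distr (PiM I (\<lambda>_. A) \<Otimes>\<^sub>M PiM I (\<lambda>_. B)) (PiM I (\<lambda>_. A \<Otimes>\<^sub>M B)) (\<lambda>(x, e). \<lambda>k\<in>I. (x k, e k))
    = PiM I (\<lambda>_. A \<Otimes>\<^sub>M B)"
    (is "distr ?XE ?P ?zip = _")
proof -
  interpret A: prob_space A by fact
  interpret B: prob_space B by fact
  interpret AB: pair_prob_space A B ..
  interpret P: product_prob_space "\<lambda>_. A \<Otimes>\<^sub>M B"
    by (rule product_prob_spaceI) (rule AB.prob_space_axioms)
  interpret PB: prob_space "PiM I (\<lambda>_. B)"
    by (intro prob_space_PiM assms(2))
  have zip[measurable]: "?zip \<in> measurable ?XE ?P"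
    by measurable
  show ?thesis
  proof (rule P.PiM_eqI[OF \<open>finite I\<close>])
    fix F assume F: "\<And>k. k \<in> I \<Longrightarrow> F k \<in> sets (A \<Otimes>\<^sub>M B)"
    then have "Pi\<^sub>E I F \<in> sets ?P"
      using \<open>finite I\<close> by (simp add: sets_PiM_I_finite)
    then have "emeasure (distr ?XE ?P ?zip) (Pi\<^sub>E I F) = emeasure ?XE (?zip -` Pi\<^sub>E I F \<inter> space ?XE)"
      by (rule emeasure_distr[OF zip])
    also have "\<dots> = (\<integral>\<^sup>+ x. \<integral>\<^sup>+ e. indicator (?zip -` Pi\<^sub>E I F \<inter> space ?XE) (x, e) \<partial>PiM I (\<lambda>_. B) \<partial>PiM I (\<lambda>_. A))"
      using measurable_sets[OF zip \<open>Pi\<^sub>E I F \<in> sets ?P\<close>] by (rule PB.emeasure_pair_measure)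
    also have "\<dots> = (\<integral>\<^sup>+ x. \<integral>\<^sup>+ e. (\<Prod>k\<in>I. indicator (F k) (x k, e k)) \<partial>PiM I (\<lambda>_. B) \<partial>PiM I (\<lambda>_. A))"
      using \<open>finite I\<close> by (intro nn_integral_cong) (auto simp: space_pair_measure PiE_iff indicator_def)
    finally show "emeasure (distr ?XE ?P ?zip) (Pi\<^sub>E I F) = (\<Prod>k\<in>I. emeasure (A \<Otimes>\<^sub>M B) (F k))"
      using nn_integral_PiM_indicator_pairs[OF assms F] by simp
  qed simp
qed

lemma
  fixes Px :: "'d::euclidean_space measure" and f :: "'d \<Rightarrow> real^'p::finite"
  assumes "prob_space Px" "sets Px = sets borel" "f \<in> borel_measurable borel" "0 < \<sigma>"
  shows prob_space_row_distr: "prob_space (row_distr Px f \<beta> \<sigma>)"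
    and sets_row_distr: "sets (row_distr Px f \<beta> \<sigma>) = sets (borel \<Otimes>\<^sub>M borel)"
    and row_distr_eq_distr: "row_distr Px f \<beta> \<sigma> =
      distr (Px \<Otimes>\<^sub>M centered_normal \<sigma>) (row_distr Px f \<beta> \<sigma>) (\<lambda>(x, e). (x, f x \<bullet> \<beta> + e))"
    and measurable_row_distr_map:
      "(\<lambda>(x, e). (x, f x \<bullet> \<beta> + e)) \<in> measurable (Px \<Otimes>\<^sub>M centered_normal \<sigma>) (row_distr Px f \<beta> \<sigma>)"
    and distr_row_distr_fst: "distr (row_distr Px f \<beta> \<sigma>) Px fst = Px"
proof -
  interpret Px: prob_space Px by fact
  interpret N: prob_space "centered_normal \<sigma>"
    by (rule prob_space_centered_normal) fact
  interpret P0: pair_prob_space Px "centered_normal \<sigma>" ..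
  define T where "T = (\<lambda>(x, e). (x, f x \<bullet> \<beta> + e))"
  have sets_P0: "sets (Px \<Otimes>\<^sub>M centered_normal \<sigma>) = sets (borel \<Otimes>\<^sub>M borel)"
    using assms(2) by (intro sets_pair_measure_cong) simp_all
  have T: "T \<in> measurable (Px \<Otimes>\<^sub>M centered_normal \<sigma>) (borel \<Otimes>\<^sub>M borel)"
    unfolding T_def measurable_cong_sets[OF sets_P0 refl] using assms(3) by measurable
  have R: "row_distr Px f \<beta> \<sigma> = distr (Px \<Otimes>\<^sub>M centered_normal \<sigma>) (borel \<Otimes>\<^sub>M borel) T"
    by (simp add: row_distr_def T_def centered_normal_def)
  show "(\<lambda>(x, e). (x, f x \<bullet> \<beta> + e)) \<in> measurable (Px \<Otimes>\<^sub>M centered_normal \<sigma>) (row_distr Px f \<beta> \<sigma>)"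
    unfolding T_def[symmetric] R using T by (subst measurable_cong_sets[OF refl sets_distr])
  show "prob_space (row_distr Px f \<beta> \<sigma>)"
    unfolding R by (rule P0.prob_space_distr[OF T])
  show sets: "sets (row_distr Px f \<beta> \<sigma>) = sets (borel \<Otimes>\<^sub>M borel)"
    unfolding R by simp
  show "row_distr Px f \<beta> \<sigma> = distr (Px \<Otimes>\<^sub>M centered_normal \<sigma>) (row_distr Px f \<beta> \<sigma>) (\<lambda>(x, e). (x, f x \<bullet> \<beta> + e))"
    unfolding T_def[symmetric] by (subst (1) R) (rule distr_cong; simp add: sets)
  have "fst \<in> measurable (borel \<Otimes>\<^sub>M borel) Px"
    by (simp add: measurable_cong_sets[OF refl assms(2)])
  then have "distr (row_distr Px f \<beta> \<sigma>) Px fst = distr (Px \<Otimes>\<^sub>M centered_normal \<sigma>) Px (fst \<circ> T)"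
    unfolding R using T by (rule distr_distr)
  also have "\<dots> = distr (Px \<Otimes>\<^sub>M centered_normal \<sigma>) Px fst"
    by (rule distr_cong) (auto simp: T_def)
  finally show "distr (row_distr Px f \<beta> \<sigma>) Px fst = Px"
    using N.distr_pair_fst[of Px] by simp
qed

lemma PiM_row_distr_eq_distr:
  fixes Px :: "'d::euclidean_space measure" and f :: "'d \<Rightarrow> real^'p::finite"
  assumes "finite I" "prob_space Px" "sets Px = sets borel" "f \<in> borel_measurable borel" "0 < \<sigma>"
  shows "PiM I (\<lambda>_. row_distr Px f \<beta> \<sigma>) =
    distr (PiM I (\<lambda>_. Px) \<Otimes>\<^sub>M PiM I (\<lambda>_. centered_normal \<sigma>)) (PiM I (\<lambda>_. row_distr Px f \<beta> \<sigma>))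
      (\<lambda>(x, e). \<lambda>k\<in>I. (x k, f (x k) \<bullet> \<beta> + e k))"
proof -
  define R where "R = row_distr Px f \<beta> \<sigma>"
  define P0 where "P0 = Px \<Otimes>\<^sub>M centered_normal \<sigma>"
  define T :: "'d \<times> real \<Rightarrow> 'd \<times> real" where "T = (\<lambda>(x, e). (x, f x \<bullet> \<beta> + e))"
  define zip where "zip = (\<lambda>(x, e). \<lambda>k\<in>I. (x k :: 'd, e k :: real))"
  note row = prob_space_row_distr[OF assms(2-5)] measurable_row_distr_map[OF assms(2-5)]
    row_distr_eq_distr[OF assms(2-5)]
  interpret Px: prob_space Px by fact
  interpret N: prob_space "centered_normal \<sigma>"
    by (rule prob_space_centered_normal) fact
  interpret P0: pair_prob_space Px "centered_normal \<sigma>" ..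
  have P0: "prob_space P0"
    unfolding P0_def by (rule P0.prob_space_axioms)
  have zip: "zip \<in> measurable (PiM I (\<lambda>_. Px) \<Otimes>\<^sub>M PiM I (\<lambda>_. centered_normal \<sigma>)) (PiM I (\<lambda>_. P0))"
    unfolding zip_def P0_def by measurable
  have compose: "compose I T \<in> measurable (PiM I (\<lambda>_. P0)) (PiM I (\<lambda>_. R))"
    using row(2) unfolding compose_def R_def P0_def T_def by measurable
  have "PiM I (\<lambda>_. R) = distr (PiM I (\<lambda>_. P0)) (PiM I (\<lambda>_. R)) (compose I T)"
    using row(1-3) P0 \<open>finite I\<close> unfolding R_def P0_def T_def
    by (subst distr_PiM_finite_prob_space') auto
  also have "\<dots> = distr (distr (PiM I (\<lambda>_. Px) \<Otimes>\<^sub>M PiM I (\<lambda>_. centered_normal \<sigma>)) (PiM I (\<lambda>_. P0)) zip)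
      (PiM I (\<lambda>_. R)) (compose I T)"
    unfolding zip_def P0_def
    by (simp add: distr_PiM_pair_eq_PiM_pair_measure Px.prob_space_axioms N.prob_space_axioms \<open>finite I\<close>)
  also have "\<dots> = distr (PiM I (\<lambda>_. Px) \<Otimes>\<^sub>M PiM I (\<lambda>_. centered_normal \<sigma>)) (PiM I (\<lambda>_. R)) (compose I T \<circ> zip)"
    using compose zip by (rule distr_distr)
  also have "\<dots> = distr (PiM I (\<lambda>_. Px) \<Otimes>\<^sub>M PiM I (\<lambda>_. centered_normal \<sigma>)) (PiM I (\<lambda>_. R))
      (\<lambda>(x, e). \<lambda>k\<in>I. (x k, f (x k) \<bullet> \<beta> + e k))"
    by (rule distr_cong) (auto simp: compose_def zip_def T_def fun_eq_iff)
  finally show ?thesis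
    unfolding R_def .
qed

lemma integral_pair_measure_eq_const_AE:
  fixes \<Phi> :: "'a \<times> 'b \<Rightarrow> real"
  assumes "prob_space A" "sigma_finite_measure B"
    and \<Phi>[measurable]: "\<Phi> \<in> borel_measurable (A \<Otimes>\<^sub>M B)" and nonneg: "\<And>z. 0 \<le> \<Phi> z"
    and inner: "AE x in A. integrable B (\<lambda>e. \<Phi> (x, e)) \<and> (\<integral>e. \<Phi> (x, e) \<partial>B) = c"
  shows "(\<integral>z. \<Phi> z \<partial>(A \<Otimes>\<^sub>M B)) = c"
proof -
  interpret A: prob_space A by fact
  interpret B: sigma_finite_measure B by fact
  have "\<exists>x. (\<integral>e. \<Phi> (x, e) \<partial>B) = c"
  proof (rule ccontr)
    assume "\<nexists>x. (\<integral>e. \<Phi> (x, e) \<partial>B) = c"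
    with inner have "AE x in A. False"
      by (auto elim: eventually_mono)
    then show False
      by simp
  qed
  then obtain x where "(\<integral>e. \<Phi> (x, e) \<partial>B) = c" ..
  moreover have "0 \<le> (\<integral>e. \<Phi> (x, e) \<partial>B)"
    by (simp add: nonneg)
  ultimately have "0 \<le> c"
    by simp
  have "AE x in A. (\<integral>\<^sup>+ e. ennreal (\<Phi> (x, e)) \<partial>B) = ennreal c"
    using inner by eventually_elim (simp add: nn_integral_eq_integral nonneg)
  then have "(\<integral>\<^sup>+ x. \<integral>\<^sup>+ e. ennreal (\<Phi> (x, e)) \<partial>B \<partial>A) = ennreal c"
    by (simp add: nn_integral_cong_AE A.emeasure_space_1)
  moreover have "(\<integral>\<^sup>+ x. \<integral>\<^sup>+ e. ennreal (\<Phi> (x, e)) \<partial>B \<partial>A) = (\<integral>\<^sup>+ z. ennreal (\<Phi> z) \<partial>(A \<Otimes>\<^sub>M B))"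
    by (rule B.nn_integral_fst) measurable
  ultimately have "(\<integral>\<^sup>+ z. ennreal (\<Phi> z) \<partial>(A \<Otimes>\<^sub>M B)) = ennreal c"
    by simp
  then show ?thesis
    using \<open>0 \<le> c\<close> by (simp add: integral_eq_nn_integral nonneg)
qed

lemma (in prob_space) distr_indep_vars_eq_PiM_identical:
  assumes "I \<noteq> {}" "indep_vars (\<lambda>_. N) W I" "\<And>k. k \<in> I \<Longrightarrow> distr M N (W k) = R"
  shows "distr M (PiM I (\<lambda>_. N)) (\<lambda>\<omega>. \<lambda>k\<in>I. W k \<omega>) = PiM I (\<lambda>_. R)"
proof -
  have "random_variable N (W k)" if "k \<in> I" for k
    using assms(2) that unfolding indep_vars_def by blast
  then have "distr M (PiM I (\<lambda>_. N)) (\<lambda>\<omega>. \<lambda>k\<in>I. W k \<omega>) = PiM I (\<lambda>k. distr M N (W k))"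
    using indep_vars_iff_distr_eq_PiM'[OF assms(1), where M'="\<lambda>_. N" and X=W] assms(2) by blast
  also have "\<dots> = PiM I (\<lambda>_. R)"
    using assms(3) by (intro PiM_cong) auto
  finally show ?thesis .
qed

lemma measurable_row_map_PiM:
  fixes Px :: "'d::euclidean_space measure" and f :: "'d \<Rightarrow> real^'p::finite"
  assumes "sets Px = sets borel" "f \<in> borel_measurable borel"
  shows "(\<lambda>z. \<lambda>k. (fst z k, f (fst z k) \<bullet> \<beta> + snd z k))
    \<in> measurable (PiM UNIV (\<lambda>_::'i::finite. Px) \<Otimes>\<^sub>M PiM UNIV (\<lambda>_. centered_normal \<sigma>))
        (PiM UNIV (\<lambda>_. borel \<Otimes>\<^sub>M borel))"
proof -
  have [measurable]: "(\<lambda>x. x k) \<in> measurable (PiM UNIV (\<lambda>_::'i. Px)) borel" for k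
    using measurable_component_singleton[of k UNIV "\<lambda>_. Px"] by (simp add: measurable_cong_sets[OF refl assms(1)])
  have "(\<lambda>z. \<lambda>k\<in>UNIV. (fst z k, f (fst z k) \<bullet> \<beta> + snd z k))
      \<in> measurable (PiM UNIV (\<lambda>_::'i. Px) \<Otimes>\<^sub>M PiM UNIV (\<lambda>_. centered_normal \<sigma>)) (PiM UNIV (\<lambda>_. borel \<Otimes>\<^sub>M borel))"
    using assms(2) by measurable
  then show ?thesis
    by (simp add: restrict_UNIV)
qed

context prob_space
begin

context
  fixes Px :: "'d::euclidean_space measure" and f :: "'d \<Rightarrow> real^'p::finite" and \<beta> \<sigma>
    and W :: "'i::finite \<Rightarrow> 'a \<Rightarrow> 'd \<times> real"
  assumes Px: "prob_space Px" "sets Px = sets borel"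
    and f: "f \<in> borel_measurable borel" and \<sigma>_pos: "0 < \<sigma>"
    and indep: "indep_vars (\<lambda>_. borel \<Otimes>\<^sub>M borel) W UNIV"
    and rows: "\<And>k. distr M (borel \<Otimes>\<^sub>M borel) (W k) = row_distr Px f \<beta> \<sigma>"
begin

lemma distr_iid_rows:
  "distr M (PiM UNIV (\<lambda>_. borel \<Otimes>\<^sub>M borel)) (\<lambda>\<omega> k. W k \<omega>) = PiM UNIV (\<lambda>_. row_distr Px f \<beta> \<sigma>)"
  using distr_indep_vars_eq_PiM_identical[OF _ indep rows] by (simp add: restrict_UNIV)

lemma measurable_iid_rows: "(\<lambda>\<omega> k. W k \<omega>) \<in> measurable M (PiM UNIV (\<lambda>_. borel \<Otimes>\<^sub>M borel))"
proof -
  have "W k \<in> measurable M (borel \<Otimes>\<^sub>M borel)" for k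
    using indep unfolding indep_vars_def by blast
  then have "(\<lambda>\<omega>. \<lambda>k\<in>UNIV. W k \<omega>) \<in> measurable M (PiM UNIV (\<lambda>_. borel \<Otimes>\<^sub>M borel))"
    by (rule measurable_restrict)
  then show ?thesis
    by (simp add: restrict_UNIV)
qed

lemma sets_PiM_row_distr: "sets (PiM UNIV (\<lambda>_::'i. row_distr Px f \<beta> \<sigma>)) = sets (PiM UNIV (\<lambda>_. borel \<Otimes>\<^sub>M borel))"
  by (intro sets_PiM_cong refl sets_row_distr Px f \<sigma>_pos)

lemma expectation_iid_rows:
  fixes h :: "('i \<Rightarrow> 'd \<times> real) \<Rightarrow> real"
  assumes h: "h \<in> borel_measurable (PiM UNIV (\<lambda>_. borel \<Otimes>\<^sub>M borel))"
  shows "expectation (\<lambda>\<omega>. h (\<lambda>k. W k \<omega>)) =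
    (\<integral>z. h (\<lambda>k. (fst z k, f (fst z k) \<bullet> \<beta> + snd z k))
      \<partial>(PiM UNIV (\<lambda>_. Px) \<Otimes>\<^sub>M PiM UNIV (\<lambda>_. centered_normal \<sigma>)))"
proof -
  let ?R = "PiM UNIV (\<lambda>_::'i. row_distr Px f \<beta> \<sigma>)"
  let ?XE = "PiM UNIV (\<lambda>_::'i. Px) \<Otimes>\<^sub>M PiM UNIV (\<lambda>_. centered_normal \<sigma>)"
  have hR: "h \<in> borel_measurable ?R"
    using h by (simp add: measurable_cong_sets[OF sets_PiM_row_distr refl])
  have \<psi>: "(\<lambda>z. \<lambda>k. (fst z k, f (fst z k) \<bullet> \<beta> + snd z k)) \<in> measurable ?XE ?R"
    using measurable_row_map_PiM[OF Px(2) f] by (simp add: measurable_cong_sets[OF refl sets_PiM_row_distr])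
  have "expectation (\<lambda>\<omega>. h (\<lambda>k. W k \<omega>)) = (\<integral>w. h w \<partial>?R)"
    using integral_distr[OF measurable_iid_rows h] by (simp add: distr_iid_rows)
  also have "\<dots> = (\<integral>w. h w \<partial>distr ?XE ?R (\<lambda>z. \<lambda>k. (fst z k, f (fst z k) \<bullet> \<beta> + snd z k)))"
    by (subst PiM_row_distr_eq_distr[OF _ Px f \<sigma>_pos]) (simp_all add: case_prod_beta' restrict_UNIV)
  also have "\<dots> = (\<integral>z. h (\<lambda>k. (fst z k, f (fst z k) \<bullet> \<beta> + snd z k)) \<partial>?XE)"
    by (rule integral_distr[OF \<psi> hR])
  finally show ?thesis .
qed

lemma expectation_iid_rows_eq_const_AE:
  fixes h :: "('i \<Rightarrow> 'd \<times> real) \<Rightarrow> real"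
  assumes h: "h \<in> borel_measurable (PiM UNIV (\<lambda>_. borel \<Otimes>\<^sub>M borel))" and nonneg: "\<And>w. 0 \<le> h w"
    and noise: "AE x in PiM UNIV (\<lambda>_. Px).
      integrable (PiM UNIV (\<lambda>_. centered_normal \<sigma>)) (\<lambda>e. h (\<lambda>k. (x k, f (x k) \<bullet> \<beta> + e k))) \<and>
      (\<integral>e. h (\<lambda>k. (x k, f (x k) \<bullet> \<beta> + e k)) \<partial>PiM UNIV (\<lambda>_. centered_normal \<sigma>)) = c"
  shows "expectation (\<lambda>\<omega>. h (\<lambda>k. W k \<omega>)) = c"
proof -
  have "(\<lambda>z. h (\<lambda>k. (fst z k, f (fst z k) \<bullet> \<beta> + snd z k)))
      \<in> borel_measurable (PiM UNIV (\<lambda>_. Px) \<Otimes>\<^sub>M PiM UNIV (\<lambda>_::'i. centered_normal \<sigma>))"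
    using measurable_row_map_PiM[OF Px(2) f] h by measurable
  then show ?thesis
    unfolding expectation_iid_rows[OF h] using noise nonneg Px(1) prob_space_centered_normal[OF \<sigma>_pos]
    by (intro integral_pair_measure_eq_const_AE prob_space_PiM prob_space_imp_sigma_finite) auto
qed

lemma AE_iid_rows_predictors:
  assumes P: "Measurable.pred (PiM UNIV (\<lambda>_. Px)) P" and AE: "AE \<omega> in M. P (\<lambda>k. fst (W k \<omega>))"
  shows "AE x in PiM UNIV (\<lambda>_::'i. Px). P x"
proof -
  have fst_borel: "fst \<in> measurable (borel \<Otimes>\<^sub>M borel) Px"
    by (simp add: measurable_cong_sets[OF refl Px(2)])
  then have fst: "fst \<in> measurable (row_distr Px f \<beta> \<sigma>) Px"
    by (simp add: measurable_cong_sets[OF sets_row_distr[OF Px f \<sigma>_pos] refl])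
  have compose: "compose UNIV fst \<in> measurable (PiM UNIV (\<lambda>_. borel \<Otimes>\<^sub>M borel)) (PiM UNIV (\<lambda>_::'i. Px))"
    using fst_borel unfolding compose_def by measurable
  have "distr M (PiM UNIV (\<lambda>_. Px)) (\<lambda>\<omega> k. fst (W k \<omega>)) =
      distr (PiM UNIV (\<lambda>_. row_distr Px f \<beta> \<sigma>)) (PiM UNIV (\<lambda>_::'i. Px)) (compose UNIV fst)"
    using distr_distr[OF compose measurable_iid_rows] by (simp add: distr_iid_rows compose_def comp_def restrict_UNIV)
  also have "\<dots> = PiM UNIV (\<lambda>_. distr (row_distr Px f \<beta> \<sigma>) Px fst)"
    using fst by (intro distr_PiM_finite_prob_space' prob_space_row_distr Px f \<sigma>_pos) simp_all
  finally have distr_X: "distr M (PiM UNIV (\<lambda>_. Px)) (\<lambda>\<omega> k. fst (W k \<omega>)) = PiM UNIV (\<lambda>_::'i. Px)"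
    by (simp add: distr_row_distr_fst[OF Px f \<sigma>_pos])
  have "(\<lambda>\<omega> k. fst (W k \<omega>)) \<in> measurable M (PiM UNIV (\<lambda>_::'i. Px))"
    using measurable_comp[OF measurable_iid_rows compose] by (simp add: compose_def comp_def restrict_UNIV)
  then have "AE x in distr M (PiM UNIV (\<lambda>_. Px)) (\<lambda>\<omega> k. fst (W k \<omega>)). P x"
    using AE P by (subst AE_distr_iff) simp_all
  then show ?thesis
    unfolding distr_X .
qed

end

end

theorem mainTheorem2:
  fixes M :: "'a measure"
    and Px :: "'d::euclidean_space measure"
    and f :: "'d \<Rightarrow> real^'p::finite"
    and \<beta> :: "real^'p"
    and \<sigma> :: real
    and X :: "'n::finite \<Rightarrow> 'a \<Rightarrow> 'd" and Y :: "'n \<Rightarrow> 'a \<Rightarrow> real"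
    and U :: "'m::finite \<Rightarrow> 'a \<Rightarrow> 'd" and V :: "'m \<Rightarrow> 'a \<Rightarrow> real"
  assumes "prob_space M"
    and "prob_space Px" and "sets Px = sets borel"
    and "f \<in> borel_measurable borel"
    and "\<sigma> > 0"
    and "CARD('p) \<le> CARD('n)"
    and "prob_space.indep_vars M (\<lambda>_. borel \<Otimes>\<^sub>M borel)
           (\<lambda>k \<omega>. case k of Inl i \<Rightarrow> (X i \<omega>, Y i \<omega>) | Inr j \<Rightarrow> (U j \<omega>, V j \<omega>))
           (UNIV :: ('n + 'm) set)"
    and "\<And>i. distr M (borel \<Otimes>\<^sub>M borel) (\<lambda>\<omega>. (X i \<omega>, Y i \<omega>)) = row_distr Px f \<beta> \<sigma>"
    and "\<And>j. distr M (borel \<Otimes>\<^sub>M borel) (\<lambda>\<omega>. (U j \<omega>, V j \<omega>)) = row_distr Px f \<beta> \<sigma>"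
    and "AE \<omega> in M. rank (design f (\<lambda>i. X i \<omega>) :: real^'p^'n) = CARD('p)"
    and "AE \<omega> in M.
           (1 / real CARD('n)) *\<^sub>R (transpose (design f (\<lambda>i. X i \<omega>)) ** (design f (\<lambda>i. X i \<omega>) :: real^'p^'n))
         = (1 / real CARD('m)) *\<^sub>R (transpose (design f (\<lambda>j. U j \<omega>)) ** (design f (\<lambda>j. U j \<omega>) :: real^'p^'m))"
  shows "prob_space.expectation M
           (\<lambda>\<omega>. (test_error f (\<lambda>j. U j \<omega>) (\<lambda>j. V j \<omega>)
                   (ols (design f (\<lambda>i. X i \<omega>) :: real^'p^'n) (\<chi> i. Y i \<omega>)))\<^sup>2)
       = \<sigma>^4 * ((1 + real CARD('p) / real CARD('n))\<^sup>2 + 2 / real CARD('m)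
                 + 4 * real CARD('p) / (real CARD('m) * real CARD('n))
                 + 2 * real CARD('p) / (real CARD('n))\<^sup>2)"
proof -
  interpret prob_space M by fact
  note Px = assms(2,3) and f = assms(4) and \<sigma>_pos = assms(5)
  define W where "W = (\<lambda>k \<omega>. case k of Inl i \<Rightarrow> (X i \<omega>, Y i \<omega>) | Inr j \<Rightarrow> (U j \<omega>, V j \<omega>))"
  define h where "h w = (test_error f (\<lambda>j. fst (w (Inr j))) (\<lambda>j. snd (w (Inr j)))
    (ols (design f (\<lambda>i. fst (w (Inl i))) :: real^'p^'n) (\<chi> i. snd (w (Inl i)))))\<^sup>2" for w :: "'n + 'm \<Rightarrow> 'd \<times> real"
  have indep: "indep_vars (\<lambda>_. borel \<Otimes>\<^sub>M borel) W UNIV"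
    using assms(7) unfolding W_def .
  have rows: "distr M (borel \<Otimes>\<^sub>M borel) (W k) = row_distr Px f \<beta> \<sigma>" for k
    using assms(8,9) by (cases k) (simp_all add: W_def)
  have h: "h \<in> borel_measurable (PiM UNIV (\<lambda>_. borel \<Otimes>\<^sub>M borel))"
    unfolding h_def by (intro borel_measurable_power borel_measurable_test_error_ols f) measurable
  have pred: "Measurable.pred (PiM UNIV (\<lambda>_::'n + 'm. Px)) (\<lambda>x. matched_split f (\<lambda>i. x (Inl i)) (\<lambda>j. x (Inr j)))"
    using measurable_component_singleton[of _ UNIV "\<lambda>_. Px"]
    by (intro pred_matched_split f) (simp_all add: measurable_cong_sets[OF refl Px(2)])
  have AE: "AE \<omega> in M. matched_split f (\<lambda>i. fst (W (Inl i) \<omega>)) (\<lambda>j. fst (W (Inr j) \<omega>))"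
    using assms(10,11) by eventually_elim (simp add: matched_split_def W_def invertible_transpose_mult_self)
  have "AE x in PiM UNIV (\<lambda>_::'n + 'm. Px). matched_split f (\<lambda>i. x (Inl i)) (\<lambda>j. x (Inr j))"
    using AE_iid_rows_predictors[OF Px f \<sigma>_pos indep rows pred AE] .
  then have "expectation (\<lambda>\<omega>. h (\<lambda>k. W k \<omega>)) = \<sigma>^4 * ((1 + real CARD('p) / real CARD('n))\<^sup>2 + 2 / real CARD('m)
      + 4 * real CARD('p) / (real CARD('m) * real CARD('n)) + 2 * real CARD('p) / (real CARD('n))\<^sup>2)"
    by (intro expectation_iid_rows_eq_const_AE[OF Px f \<sigma>_pos indep rows h])
      (auto simp: h_def elim!: eventually_mono intro: integrable_centered_normal_test_error_ols_square[OF \<sigma>_pos]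
        integral_centered_normal_test_error_ols_square[OF \<sigma>_pos])
  then show ?thesis
    by (simp add: h_def W_def)
qed

end
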